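(* Let $G$ and $H$ be lcsc groups and suppose $G\times H$ acts (set-theoretically) on a set $\Omega$, and there is a subset $Z\subset\Omega$ such that: (i) $G.Z=\Omega=H.Z$; (ii) the sets $\{g\in G: g.Z\cap Z\ne\emptyset\}$ and $\{h\in H: h.Z\cap Z\ne\emptyset\}$ are precompact; (iii) for every compact $K\subset G$ there is a compact $L_K\subset H$ with $K.Z\subset L_K.Z$, and for every compact $L\subset H$ there is a compact $K_L\subset G$ with $L.Z\subset K_L.Z$. Then $G$ and $H$ are coarsely equivalent.
   Context: lcsc = locally compact second countable Hausdorff; $G$ and $H$ act on $\Omega$ through $G\times\{e_H\}$ and $\{e_G\}\times H$, so the two actions commute. Coarse equivalence of lcsc groups: $G$ and $H$ are coarsely equivalent if, after equipping each with a proper (closed balls compact), compatible (inducing the topology), left-invariant metric $d_G$, $d_H$, there is a map $f:G\to H$ with $\sup_{h\in H}d_H(h,f(G))<\infty$ and such that for all sequences $(g_n),(g_n')$ in $G$: $d_G(g_n,g_n')\to\infty$ iff $d_H(f(g_n),f(g_n'))\to\infty$. *)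

theory Defs
  imports "HOL-Analysis.Analysis"
begin

text \<open>Topological groups, written additively (group_add does NOT require commutativity).\<close>
definition topological_group :: "'g::{group_add, topological_space} itself \<Rightarrow> bool" where
  "topological_group _ \<longleftrightarrow>
     continuous_on (UNIV :: ('g \<times> 'g) set) (\<lambda>p. fst p + snd p) \<and>
     continuous_on (UNIV :: 'g set) uminus"

text \<open>lcsc group: locally compact, second countable, Hausdorff topological group.
  Second countability and Hausdorffness are imposed via the type classes.\<close>
definition lcsc_group :: "'g::{group_add, t2_space, second_countable_topology} itself \<Rightarrow> bool" where
  "lcsc_group T \<longleftrightarrow> topological_group T \<and> locally_compact_space (euclidean :: 'g topology)"

definition proper_compatible_left_invariant_metric ::
    "('g::{group_add, topological_space} \<Rightarrow> 'g \<Rightarrow> real) \<Rightarrow> bool" where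
  "proper_compatible_left_invariant_metric d \<longleftrightarrow>
     (\<forall>x y. d x y = 0 \<longleftrightarrow> x = y) \<and>
     (\<forall>x y. d x y = d y x) \<and>
     (\<forall>x y z. d x z \<le> d x y + d y z) \<and>
     (\<forall>x r. compact {y. d x y \<le> r}) \<and>
     (\<forall>S. open S \<longleftrightarrow> (\<forall>x\<in>S. \<exists>e>0. \<forall>y. d x y < e \<longrightarrow> y \<in> S)) \<and>
     (\<forall>g x y. d (g + x) (g + y) = d x y)"

definition coarsely_equivalent ::
    "'g::{group_add, topological_space} itself \<Rightarrow> 'h::{group_add, topological_space} itself \<Rightarrow> bool" where
  "coarsely_equivalent _ _ \<longleftrightarrow>
     (\<exists>(dG :: 'g \<Rightarrow> 'g \<Rightarrow> real) (dH :: 'h \<Rightarrow> 'h \<Rightarrow> real) (f :: 'g \<Rightarrow> 'h).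
        proper_compatible_left_invariant_metric dG \<and>
        proper_compatible_left_invariant_metric dH \<and>
        (\<exists>C. \<forall>h. (INF g. dH h (f g)) \<le> C) \<and>
        (\<forall>gs gs' :: nat \<Rightarrow> 'g.
           filterlim (\<lambda>n. dG (gs n) (gs' n)) at_top sequentially \<longleftrightarrow>
           filterlim (\<lambda>n. dH (f (gs n)) (f (gs' n))) at_top sequentially))"

definition product_action :: "('g::group_add \<times> 'h::group_add \<Rightarrow> 'w \<Rightarrow> 'w) \<Rightarrow> bool" where
  "product_action act \<longleftrightarrow>
     (\<forall>w. act (0, 0) w = w) \<and>
     (\<forall>g g' h h' w. act (g + g', h + h') w = act (g, h) (act (g', h') w))"

end

theory Submission
  imports Defs
begin

text \<open>Every lcsc group carries a proper compatible left-invariant metric: a supremum of weighted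
  translates of bump functions gives a compatible left-invariant metric, and a weighted word metric
  over a compact exhaustion makes it proper without changing small distances.

  Fix a base point \<open>z\<^sub>0\<close> and relate \<open>g \<in> G\<close> to \<open>h \<in> H\<close> when \<open>z\<^sub>0 \<in> (g, h).Z\<close>; by (i) every
  element of either group is related to something. If \<open>g\<close> and \<open>g'\<close> are related to \<open>h\<close> and \<open>h'\<close> and
  \<open>g\<^sup>-\<^sup>1g'\<close> lies in a compact set \<open>K\<close>, then \<open>h\<^sup>-\<^sup>1h'\<close> lies in \<open>L\<^sub>K P\<^sup>-\<^sup>1\<close>, where \<open>L\<^sub>K\<close> comes
  from (iii) and \<open>P\<close> is the precompact set of (ii) for \<open>H\<close>; symmetrically for \<open>H\<close>. So bounded
  distances correspond to bounded distances, and any choice function \<open>G \<rightarrow> H\<close> of the relation is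
  a coarse equivalence.\<close>

section \<open>Topological groups\<close>

lemma topological_group_continuous_on_add:
  fixes f g :: "'b::topological_space \<Rightarrow> 'a::{group_add,topological_space}"
  assumes "topological_group TYPE('a)" "continuous_on S f" "continuous_on S g"
  shows "continuous_on S (\<lambda>x. f x + g x)"
proof -
  have "continuous_on UNIV (\<lambda>p::'a \<times> 'a. fst p + snd p)"
    using assms(1) unfolding topological_group_def by blast
  from continuous_on_compose2[OF this continuous_on_Pair[OF assms(2,3)]] show ?thesis by auto
qed

lemma topological_group_continuous_on_uminus:
  fixes f :: "'b::topological_space \<Rightarrow> 'a::{group_add,topological_space}"
  assumes "topological_group TYPE('a)" "continuous_on S f"
  shows "continuous_on S (\<lambda>x. - f x)"
proof -
  have "continuous_on UNIV (uminus :: 'a \<Rightarrow> 'a)"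
    using assms(1) unfolding topological_group_def by blast
  from continuous_on_compose2[OF this assms(2)] show ?thesis by auto
qed

lemma topological_group_open_vimage_add:
  fixes S :: "'a::{group_add,topological_space} set"
  assumes "topological_group TYPE('a)" "open S"
  shows "open ((\<lambda>y. a + y) -` S)"
  using continuous_on_open_vimage[of UNIV "\<lambda>y. a + y"] assms
    topological_group_continuous_on_add[OF assms(1) continuous_on_const continuous_on_id]
  by auto

lemma topological_group_open_translation:
  fixes S :: "'a::{group_add,topological_space} set"
  assumes "topological_group TYPE('a)" "open S"
  shows "open ((\<lambda>y. a + y) ` S)"
proof -
  have "(\<lambda>y. a + y) ` S = (\<lambda>y. -a + y) -` S"
    by (force simp: add.assoc[symmetric] intro: image_eqI[of _ _ "-a + _"])
  then show ?thesis using topological_group_open_vimage_add[OF assms] by simp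
qed

lemma topological_group_open_vimage_uminus:
  fixes S :: "'a::{group_add,topological_space} set"
  assumes "topological_group TYPE('a)" "open S"
  shows "open (uminus -` S)"
  using continuous_on_open_vimage[of UNIV uminus] assms
    topological_group_continuous_on_uminus[OF assms(1) continuous_on_id]
  by auto

lemma topological_group_compact_translation:
  fixes S :: "'a::{group_add,topological_space} set"
  assumes "topological_group TYPE('a)" "compact S"
  shows "compact ((\<lambda>y. a + y) ` S)"
  by (intro compact_continuous_image[OF _ assms(2)] topological_group_continuous_on_add[OF assms(1)]
      continuous_on_const continuous_on_id)

lemma topological_group_compact_uminus:
  fixes S :: "'a::{group_add,topological_space} set"
  assumes "topological_group TYPE('a)" "compact S"
  shows "compact (uminus ` S)"
  by (intro compact_continuous_image[OF _ assms(2)]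
      topological_group_continuous_on_uminus[OF assms(1) continuous_on_id])

lemma topological_group_compact_add_image:
  fixes S T :: "'a::{group_add,topological_space} set"
  assumes "topological_group TYPE('a)" "compact S" "compact T"
  shows "compact ((\<lambda>(s, t). s + t) ` (S \<times> T))"
proof -
  have "continuous_on (S \<times> T) (\<lambda>p. fst p + snd p)"
    by (intro topological_group_continuous_on_add[OF assms(1)] continuous_on_fst continuous_on_snd
        continuous_on_id)
  from compact_continuous_image[OF this compact_Times[OF assms(2,3)]] show ?thesis
    by (simp add: case_prod_beta')
qed

lemma topological_group_compact_diff_image:
  fixes S T :: "'a::{group_add,topological_space} set"
  assumes "topological_group TYPE('a)" "compact S" "compact T"
  shows "compact ((\<lambda>(s, t). s + - t) ` (S \<times> T))"
proof -
  have "(\<lambda>(s, t). s + - t) ` (S \<times> T) = (\<lambda>(s, t). s + t) ` (S \<times> uminus ` T)"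
    by force
  then show ?thesis
    using topological_group_compact_add_image[OF assms(1,2)
        topological_group_compact_uminus[OF assms(1,3)]]
    by simp
qed

lemma lcsc_group_imp_topological_group:
  "lcsc_group TYPE('a::{group_add,t2_space,second_countable_topology}) \<Longrightarrow> topological_group TYPE('a)"
  unfolding lcsc_group_def by blast

lemma lcsc_group_compact_neighbourhood:
  fixes x :: "'a::{group_add,t2_space,second_countable_topology}"
  assumes "lcsc_group TYPE('a)"
  obtains V K where "open V" "compact K" "x \<in> V" "V \<subseteq> K"
proof -
  have "\<exists>V K. openin euclidean V \<and> compactin euclidean K \<and> x \<in> V \<and> V \<subseteq> K"
    using assms unfolding lcsc_group_def locally_compact_space_def by simp
  then show ?thesis using that by auto
qed

lemma lcsc_group_Urysohn:
  fixes U :: "'a::{group_add,t2_space,second_countable_topology} set"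
  assumes "lcsc_group TYPE('a)" "open U" "x \<in> U"
  obtains f :: "'a \<Rightarrow> real"
  where "continuous_on UNIV f" "\<And>y. 0 \<le> f y \<and> f y \<le> 1" "f x = 1" "\<And>y. y \<notin> U \<Longrightarrow> f y = 0"
proof -
  have "Hausdorff_space (euclidean :: 'a topology)"
    unfolding Hausdorff_space_def disjnt_def using separation_t2 by auto
  with assms(1) have "completely_regular_space (euclidean :: 'a topology)"
    unfolding lcsc_group_def by (blast intro: locally_compact_regular_imp_completely_regular_space)
  moreover have "closedin euclidean (- U)" using assms(2) by (simp add: closed_open)
  moreover have "x \<in> topspace euclidean - (- U)" using assms(3) by simp
  ultimately obtain g :: "'a \<Rightarrow> real"
    where g: "continuous_map euclidean (top_of_set {0..1}) g" "g x = 0" "g ` (- U) \<subseteq> {1}"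
    unfolding completely_regular_space_def by blast
  then have "continuous_on UNIV g" "\<And>y. g y \<in> {0..1}"
    unfolding continuous_map_in_subtopology by auto
  then show ?thesis
    using g(2,3) by (intro that[of "\<lambda>y. 1 - g y"] continuous_intros) auto
qed

lemma lcsc_group_sigma_compact:
  assumes "lcsc_group TYPE('a)"
  obtains C :: "nat \<Rightarrow> 'a::{group_add,t2_space,second_countable_topology} set"
  where "\<And>n. compact (C n)" "\<And>x. \<exists>n. x \<in> C n"
proof -
  define \<F> where "\<F> = {U::'a set. open U \<and> (\<exists>K. compact K \<and> U \<subseteq> K)}"
  have cover: "x \<in> \<Union>\<F>" for x
  proof -
    obtain V K :: "'a set" where "open V" "compact K" "x \<in> V" "V \<subseteq> K"
      using lcsc_group_compact_neighbourhood[OF assms] .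
    then show ?thesis unfolding \<F>_def by blast
  qed
  obtain \<F>' where \<F>': "\<F>' \<subseteq> \<F>" "countable \<F>'" "\<Union>\<F>' = \<Union>\<F>"
    using Lindelof[of \<F>] unfolding \<F>_def by blast
  have "\<F>' \<noteq> {}" using cover[of 0] \<F>'(3) by blast
  then have range: "range (from_nat_into \<F>') = \<F>'" using \<F>'(2) by simp
  have "\<exists>K. compact K \<and> from_nat_into \<F>' n \<subseteq> K" for n
  proof -
    have "from_nat_into \<F>' n \<in> \<F>" using range \<F>'(1) by blast
    then show ?thesis unfolding \<F>_def by blast
  qed
  then obtain C where C: "\<And>n. compact (C n)" "\<And>n. from_nat_into \<F>' n \<subseteq> C n" by metis
  have "\<exists>n. x \<in> C n" for x
  proof -
    obtain U where "U \<in> \<F>'" "x \<in> U" using cover[of x] \<F>'(3) by blast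
    then obtain n where "U = from_nat_into \<F>' n" using range by (metis rangeE)
    then show ?thesis using C(2) \<open>x \<in> U\<close> by blast
  qed
  with C(1) show ?thesis by (rule that)
qed

lemma topological_group_uniformly_continuous_compact_support:
  fixes f :: "'a::{group_add,topological_space} \<Rightarrow> real"
  assumes "topological_group TYPE('a)" "continuous_on UNIV f" "compact K"
    and "\<And>x. x \<notin> K \<Longrightarrow> f x = 0" "e > 0"
  obtains W where "open W" "0 \<in> W" "\<And>s t. s \<in> W \<Longrightarrow> \<bar>f (s + t) - f t\<bar> < e"
proof -
  define \<Phi> where "\<Phi> p = f (fst p + snd p) - f (snd p)" for p :: "'a \<times> 'a"
  have "continuous_on UNIV (\<lambda>p::'a \<times> 'a. fst p + snd p)"
    by (intro topological_group_continuous_on_add[OF assms(1)] continuous_on_fst continuous_on_snd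
        continuous_on_id)
  then have "continuous_on UNIV \<Phi>"
    unfolding \<Phi>_def using continuous_on_compose2[OF assms(2)] continuous_on_snd[OF continuous_on_id]
    by (intro continuous_on_diff) blast+
  then have "open (\<Phi> -` {-e<..<e})"
    by (simp add: continuous_on_open_vimage)
  moreover have "{0} \<times> K \<subseteq> \<Phi> -` {-e<..<e}" using assms(5) by (simp add: \<Phi>_def subset_iff)
  ultimately obtain X where X: "0 \<in> X" "open X" "X \<times> K \<subseteq> \<Phi> -` {-e<..<e}"
    using Elementary_Topology.tube_lemma[OF assms(3)] by metis
  then have small: "\<bar>\<Phi> (s, t)\<bar> < e" if "s \<in> X" "t \<in> K" for s t
    using that by (auto simp: abs_less_iff)
  define W where "W = X \<inter> uminus -` X"
  have "open W"
    unfolding W_def using X(2) topological_group_open_vimage_uminus[OF assms(1) X(2)] by blast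
  moreover have "0 \<in> W" unfolding W_def using X(1) by simp
  moreover have "\<bar>f (s + t) - f t\<bar> < e" if "s \<in> W" for s t
  proof (cases "t \<in> K")
    case True
    then show ?thesis using small[of s t] \<open>s \<in> W\<close> unfolding W_def \<Phi>_def by simp
  next
    case False
    show ?thesis
    proof (cases "s + t \<in> K")
      case True
      then have "\<bar>\<Phi> (-s, s + t)\<bar> < e" using small \<open>s \<in> W\<close> unfolding W_def by simp
      then show ?thesis by (simp add: \<Phi>_def add.assoc[symmetric] abs_minus_commute)
    next
      case False
      then show ?thesis using \<open>t \<notin> K\<close> assms(4,5) by simp
    qed
  qed
  ultimately show ?thesis by (rule that)
qed

section \<open>Compatible left-invariant metrics\<close>

locale compatible_left_invariant_metric =
  fixes d :: "'a::{group_add,topological_space} \<Rightarrow> 'a \<Rightarrow> real"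
  assumes zero_iff: "\<And>x y. d x y = 0 \<longleftrightarrow> x = y"
    and commute: "\<And>x y. d x y = d y x"
    and triangle: "\<And>x y z. d x z \<le> d x y + d y z"
    and open_iff: "\<And>S. open S \<longleftrightarrow> (\<forall>x\<in>S. \<exists>e>0. \<forall>y. d x y < e \<longrightarrow> y \<in> S)"
    and left_invariant: "\<And>g x y. d (g + x) (g + y) = d x y"

lemma proper_compatible_left_invariant_metric_iff:
  "proper_compatible_left_invariant_metric d \<longleftrightarrow>
     compatible_left_invariant_metric d \<and> (\<forall>x r. compact {y. d x y \<le> r})"
  unfolding proper_compatible_left_invariant_metric_def compatible_left_invariant_metric_def
  by argo

context compatible_left_invariant_metric
begin

lemma dist_self: "d x x = 0"
  by (simp add: zero_iff)

lemma nonneg: "0 \<le> d x y"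
  using triangle[of x x y] commute[of y x] dist_self[of x] by linarith

lemma eq_dist_zero: "d x y = d 0 (-x + y)"
  using left_invariant[of "-x" x y] by simp

lemma dist_zero_add: "d 0 (a + b) \<le> d 0 a + d 0 b"
  using triangle[of 0 "a + b" a] left_invariant[of a 0 b] by (simp del: left_invariant)

lemma dist_zero_uminus: "d 0 (- a) = d 0 a"
  using left_invariant[of a 0 "- a"] commute[of a 0] by simp

lemma open_ball: "open {y. d x y < r}"
  unfolding open_iff
proof
  fix z assume "z \<in> {y. d x y < r}"
  then have "r - d x z > 0" by simp
  moreover have "d x y < r" if "d z y < r - d x z" for y
    using triangle[of x y z] that by linarith
  ultimately show "\<exists>e>0. \<forall>y. d z y < e \<longrightarrow> y \<in> {y. d x y < r}" by blast
qed

lemma closed_ball: "closed {y. d x y \<le> r}"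
  unfolding closed_def open_iff
proof
  fix z assume "z \<in> - {y. d x y \<le> r}"
  then have "d x z - r > 0" by simp
  moreover have "\<not> d x y \<le> r" if "d z y < d x z - r" for y
    using triangle[of x z y] commute[of z y] that by linarith
  ultimately show "\<exists>e>0. \<forall>y. d z y < e \<longrightarrow> y \<in> - {y. d x y \<le> r}" by blast
qed

lemma compact_imp_bounded:
  assumes "compact S"
  obtains B where "\<And>s. s \<in> S \<Longrightarrow> d a s \<le> B"
proof -
  have "S \<subseteq> (\<Union>n. {y. d a y < real n})"
    by (auto intro: reals_Archimedean2)
  then obtain N where N: "finite N" "S \<subseteq> (\<Union>n\<in>N. {y. d a y < real n})"
    by (rule compactE_image[OF assms open_ball])
  have "d a s \<le> real (Max (insert 0 N))" if "s \<in> S" for s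
  proof -
    obtain n where "n \<in> N" "d a s < real n" using N(2) \<open>s \<in> S\<close> by blast
    moreover have "n \<le> Max (insert 0 N)" using N(1) \<open>n \<in> N\<close> by simp
    ultimately show ?thesis by linarith
  qed
  then show ?thesis by (rule that)
qed

lemma compact_small_closed_ball:
  assumes "open V" "compact K" "x \<in> V" "V \<subseteq> K"
  obtains e where "e > 0" "compact {y. d x y \<le> e}"
proof -
  obtain e where e: "e > 0" "\<And>y. d x y < e \<Longrightarrow> y \<in> V"
    using assms(1,3) unfolding open_iff by blast
  have "{y. d x y \<le> e / 2} \<subseteq> K"
  proof
    fix y assume "y \<in> {y. d x y \<le> e / 2}"
    then have "d x y < e" using e(1) by simp
    then show "y \<in> K" using e(2) assms(4) by blast
  qed
  then have "compact {y. d x y \<le> e / 2}"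
    using closed_Int_compact[OF closed_ball assms(2), of x "e / 2"] by (simp add: Int_absorb2)
  moreover have "e / 2 > 0" using e(1) by simp
  ultimately show ?thesis using that[of "e / 2"] by simp
qed

end

lemma left_invariant_ball_in_open:
  fixes d :: "'a::{group_add,topological_space} \<Rightarrow> 'a \<Rightarrow> real"
  assumes "topological_group TYPE('a)" "\<And>g x y. d (g + x) (g + y) = d x y"
    and "\<And>U. open U \<Longrightarrow> 0 \<in> U \<Longrightarrow> \<exists>e>0. \<forall>s. d 0 s < e \<longrightarrow> s \<in> U"
    and "open S" "x \<in> S"
  shows "\<exists>e>0. \<forall>y. d x y < e \<longrightarrow> y \<in> S"
proof -
  have "open ((\<lambda>y. x + y) -` S)" "0 \<in> (\<lambda>y. x + y) -` S"
    using topological_group_open_vimage_add[OF assms(1,4)] assms(5) by auto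
  then obtain e where "e > 0" "\<And>s. d 0 s < e \<Longrightarrow> x + s \<in> S"
    using assms(3) by blast
  moreover have "x + (-x + y) = y" "d x y = d 0 (-x + y)" for y
    using assms(2)[of "-x" x y] by (simp_all add: add.assoc[symmetric])
  ultimately show ?thesis by metis
qed

lemma left_invariant_open_if_balls:
  fixes d :: "'a::{group_add,topological_space} \<Rightarrow> 'a \<Rightarrow> real"
  assumes "topological_group TYPE('a)" "\<And>g x y. d (g + x) (g + y) = d x y"
    and "\<And>e. e > 0 \<Longrightarrow> \<exists>W. open W \<and> 0 \<in> W \<and> (\<forall>s\<in>W. d 0 s < e)"
    and balls: "\<forall>x\<in>S. \<exists>e>0. \<forall>y. d x y < e \<longrightarrow> y \<in> S"
  shows "open S"
proof (rule open_subopen[THEN iffD2], intro ballI)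
  fix x assume "x \<in> S"
  then obtain e where "e > 0" and e: "\<And>y. d x y < e \<Longrightarrow> y \<in> S"
    using balls by blast
  obtain W where W: "open W" "0 \<in> W" "\<And>s. s \<in> W \<Longrightarrow> d 0 s < e"
    using assms(3)[OF \<open>e > 0\<close>] by blast
  have "d x (x + s) = d 0 s" for s
    using assms(2)[of x 0 s] by simp
  then have "(\<lambda>s. x + s) ` W \<subseteq> S" using W(3) e by auto
  moreover have "open ((\<lambda>s. x + s) ` W)"
    by (rule topological_group_open_translation[OF assms(1) W(1)])
  moreover have "x \<in> (\<lambda>s. x + s) ` W" using W(2) by (intro image_eqI[of _ _ 0]) auto
  ultimately show "\<exists>T. open T \<and> x \<in> T \<and> T \<subseteq> S" by blast
qed

lemma compatible_left_invariant_metricI: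
  fixes d :: "'a::{group_add,t1_space} \<Rightarrow> 'a \<Rightarrow> real"
  assumes "topological_group TYPE('a)"
    and "\<And>x. d x x = 0" "\<And>x y. d x y = d y x" "\<And>x y z. d x z \<le> d x y + d y z"
    and "\<And>g x y. d (g + x) (g + y) = d x y"
    and "\<And>U. open U \<Longrightarrow> 0 \<in> U \<Longrightarrow> \<exists>e>0. \<forall>s. d 0 s < e \<longrightarrow> s \<in> U"
    and "\<And>e. e > 0 \<Longrightarrow> \<exists>W. open W \<and> 0 \<in> W \<and> (\<forall>s\<in>W. d 0 s < e)"
  shows "compatible_left_invariant_metric d"
proof
  note ball_in_open = left_invariant_ball_in_open[OF assms(1,5,6)]
  show "open S \<longleftrightarrow> (\<forall>x\<in>S. \<exists>e>0. \<forall>y. d x y < e \<longrightarrow> y \<in> S)" for S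
  proof
    assume "open S"
    then show "\<forall>x\<in>S. \<exists>e>0. \<forall>y. d x y < e \<longrightarrow> y \<in> S" using ball_in_open by blast
  qed (rule left_invariant_open_if_balls[OF assms(1,5,7)])
  show "d x y = 0 \<longleftrightarrow> x = y" for x y
  proof
    assume "d x y = 0"
    show "x = y"
    proof (rule ccontr)
      assume "x \<noteq> y"
      then obtain U where "open U" "x \<in> U" "y \<notin> U" using t1_space by blast
      then obtain e where "e > 0" "\<And>z. d x z < e \<Longrightarrow> z \<in> U" using ball_in_open by blast
      with \<open>d x y = 0\<close> have "y \<in> U" by simp
      with \<open>y \<notin> U\<close> show False by contradiction
    qed
  qed (simp add: assms(2))
  show "d x y = d y x" "d x z \<le> d x y + d y z" "d (g + x) (g + y) = d x y" for x y z g
    by (fact assms)+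
qed

locale bump_family =
  fixes f :: "nat \<Rightarrow> 'a::{group_add,t1_space} \<Rightarrow> real" and A :: "nat \<Rightarrow> 'a set"
  assumes nonneg: "0 \<le> f n y" and le_one: "f n y \<le> 1" and at_zero: "f n 0 = 1"
    and support: "y \<notin> A n \<Longrightarrow> f n y = 0"
    and nhds_base: "open U \<Longrightarrow> 0 \<in> U \<Longrightarrow> \<exists>n. A n \<subseteq> U"
    and uniformly_continuous:
      "e > 0 \<Longrightarrow> \<exists>W. open W \<and> 0 \<in> W \<and> (\<forall>s\<in>W. \<forall>t. \<bar>f n (s + t) - f n t\<bar> < e)"
begin

definition gap :: "'a \<Rightarrow> 'a \<Rightarrow> nat \<Rightarrow> 'a \<Rightarrow> real" where
  "gap x y n t = (1/2)^n * \<bar>f n (-x + t) - f n (-y + t)\<bar>"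

text \<open>Taking the supremum over all \<open>t\<close> makes the metric left invariant, and the weights \<open>(1/2)^n\<close>
  make it continuous while \<open>A n\<close> shrinking to \<open>0\<close> makes it separate points.\<close>
definition metric :: "'a \<Rightarrow> 'a \<Rightarrow> real" where
  "metric x y = (SUP (n, t). gap x y n t)"

lemma gap_le_power: "gap x y n t \<le> (1/2)^n"
proof -
  have "\<bar>f n (-x + t) - f n (-y + t)\<bar> \<le> 1"
    using nonneg[of n "-x + t"] le_one[of n "-x + t"] nonneg[of n "-y + t"] le_one[of n "-y + t"]
    by (simp add: abs_le_iff)
  then show ?thesis unfolding gap_def by (simp add: mult_left_le)
qed

lemma gap_le_metric: "gap x y n t \<le> metric x y"
proof -
  have "gap x y n' t' \<le> 1" for n' t'
    using gap_le_power[of x y n' t'] power_le_one[of "1/2::real" n'] by linarith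
  then have "bdd_above (range (\<lambda>(n, t). gap x y n t))" by (intro bdd_aboveI[of _ 1]) auto
  then show ?thesis unfolding metric_def by (rule cSUP_upper2[of _ _ "(n, t)"]) auto
qed

lemma metric_le: "(\<And>n t. gap x y n t \<le> c) \<Longrightarrow> metric x y \<le> c"
  unfolding metric_def by (rule cSUP_least) auto

lemma metric_triangle: "metric x z \<le> metric x y + metric y z"
proof (rule metric_le)
  fix n t
  have "gap x z n t \<le> gap x y n t + gap y z n t"
    unfolding gap_def distrib_left[symmetric] by (intro mult_left_mono) auto
  also have "\<dots> \<le> metric x y + metric y z" by (intro add_mono gap_le_metric)
  finally show "gap x z n t \<le> metric x y + metric y z" .
qed

lemma metric_left_invariant: "metric (g + x) (g + y) = metric x y"
proof -
  have shift: "gap (g + x) (g + y) n t = gap x y n (-g + t)" for g x y n t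
    unfolding gap_def by (simp only: minus_add add.assoc)
  show ?thesis
  proof (rule antisym)
    show "metric (g + x) (g + y) \<le> metric x y"
      by (rule metric_le) (simp add: shift gap_le_metric)
    show "metric x y \<le> metric (g + x) (g + y)"
    proof (rule metric_le)
      fix n t
      show "gap x y n t \<le> metric (g + x) (g + y)"
        using shift[of g x y n "g + t"] gap_le_metric[of "g + x" "g + y" n "g + t"]
        by (simp add: add.assoc[symmetric])
    qed
  qed
qed

lemma metric_commute: "metric x y = metric y x"
  unfolding metric_def gap_def by (simp add: abs_minus_commute)

lemma metric_self: "metric x x = 0"
  using metric_le[of x x 0] gap_le_metric[of x x 0 0] by (simp add: gap_def)

lemma power_le_metric: "-x + y \<notin> A n \<Longrightarrow> (1/2)^n \<le> metric x y"
  using gap_le_metric[of x y n y] by (simp add: gap_def support at_zero)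

text \<open>Only the first \<open>N\<close> summands matter up to \<open>(1/2)^N\<close>, and each of them is uniformly continuous.\<close>
lemma metric_small_near_zero:
  assumes "e > 0"
  obtains W where "open W" "0 \<in> W" "\<And>s. s \<in> W \<Longrightarrow> metric 0 s < e"
proof -
  obtain N where N: "(1/2::real)^N < e/2"
    using real_arch_pow_inv[of "e/2" "1/2::real"] assms by auto
  have "\<forall>n. \<exists>W. open W \<and> 0 \<in> W \<and> (\<forall>s\<in>W. \<forall>t. \<bar>f n (s + t) - f n t\<bar> < e/2)"
    using uniformly_continuous[of "e/2"] half_gt_zero[OF assms] by blast
  then obtain V where V: "\<And>n. open (V n)" "\<And>n. 0 \<in> V n"
    "\<And>n s t. s \<in> V n \<Longrightarrow> \<bar>f n (s + t) - f n t\<bar> < e/2"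
    by metis
  define W where "W = (\<Inter>n<N. V n)"
  have "metric 0 s \<le> e/2" if "s \<in> W" for s
  proof (rule metric_le)
    fix n t
    show "gap 0 s n t \<le> e/2"
    proof (cases "n < N")
      case True
      then have "\<bar>f n (s + (-s + t)) - f n (-s + t)\<bar> < e/2"
        using V(3) \<open>s \<in> W\<close> unfolding W_def by blast
      then have "\<bar>f n t - f n (-s + t)\<bar> \<le> e/2" by (simp add: add.assoc[symmetric])
      moreover have "(1/2::real)^n \<le> 1" by (simp add: power_le_one)
      ultimately show ?thesis
        unfolding gap_def using mult_mono[of "(1/2::real)^n" 1 _ "e/2"] by simp
    next
      case False
      then have "(1/2::real)^n \<le> (1/2)^N" by (intro power_decreasing) auto
      then show ?thesis using gap_le_power[of 0 s n t] N by linarith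
    qed
  qed
  then have "metric 0 s < e" if "s \<in> W" for s
    using that assms by fastforce
  moreover have "open W" "0 \<in> W" unfolding W_def using V(1,2) by auto
  ultimately show ?thesis using that by blast
qed

lemma metric_compatible:
  assumes "topological_group TYPE('a)"
  shows "compatible_left_invariant_metric metric"
proof (rule compatible_left_invariant_metricI[where d = metric, OF assms metric_self metric_commute
      metric_triangle metric_left_invariant])
  show "\<exists>e>0. \<forall>s. metric 0 s < e \<longrightarrow> s \<in> U" if "open U" "0 \<in> U" for U
  proof -
    from nhds_base[OF that] obtain n where "A n \<subseteq> U" by blast
    have "s \<in> U" if "metric 0 s < (1/2)^n" for s
    proof (rule ccontr)
      assume "s \<notin> U"
      then have "-0 + s \<notin> A n" using \<open>A n \<subseteq> U\<close> by auto
      then have "(1/2)^n \<le> metric 0 s" by (rule power_le_metric)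
      with that show False by simp
    qed
    moreover have "(0::real) < (1/2)^n" by simp
    ultimately show ?thesis by blast
  qed
  show "\<exists>W. open W \<and> 0 \<in> W \<and> (\<forall>s\<in>W. metric 0 s < e)" if "e > 0" for e
  proof -
    obtain W where "open W" "0 \<in> W" "\<And>s. s \<in> W \<Longrightarrow> metric 0 s < e"
      using metric_small_near_zero[OF \<open>e > 0\<close>] by blast
    then show ?thesis by blast
  qed
qed

end

lemma lcsc_group_compatible_left_invariant_metric:
  assumes "lcsc_group TYPE('a)"
  obtains d :: "'a::{group_add,t2_space,second_countable_topology} \<Rightarrow> 'a \<Rightarrow> real"
  where "compatible_left_invariant_metric d"
proof -
  have tg: "topological_group TYPE('a)" by (rule lcsc_group_imp_topological_group[OF assms])
  obtain V K :: "'a set" where VK: "open V" "compact K" "0 \<in> V" "V \<subseteq> K"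
    by (rule lcsc_group_compact_neighbourhood[OF assms])
  obtain A :: "nat \<Rightarrow> 'a set" where A: "\<And>n. 0 \<in> A n \<and> open (A n)"
    and base: "\<And>U. open U \<and> 0 \<in> U \<longrightarrow> (\<exists>n. A n \<subseteq> U)"
    using first_countable_basis[of "0::'a"] by blast
  have "\<forall>n. \<exists>h::'a \<Rightarrow> real. continuous_on UNIV h \<and> (\<forall>y. 0 \<le> h y \<and> h y \<le> 1) \<and> h 0 = 1
          \<and> (\<forall>y. y \<notin> A n \<inter> V \<longrightarrow> h y = 0)"
  proof
    fix n
    have "open (A n \<inter> V)" "0 \<in> A n \<inter> V" using A[of n] VK by auto
    from lcsc_group_Urysohn[OF assms this] show "\<exists>h::'a \<Rightarrow> real. continuous_on UNIV h
      \<and> (\<forall>y. 0 \<le> h y \<and> h y \<le> 1) \<and> h 0 = 1 \<and> (\<forall>y. y \<notin> A n \<inter> V \<longrightarrow> h y = 0)"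
      by metis
  qed
  then obtain f :: "nat \<Rightarrow> 'a \<Rightarrow> real" where f: "\<And>n. continuous_on UNIV (f n)"
    "\<And>n y. 0 \<le> f n y \<and> f n y \<le> 1" "\<And>n. f n 0 = 1" "\<And>n y. y \<notin> A n \<inter> V \<Longrightarrow> f n y = 0"
    by metis
  interpret bump_family f "\<lambda>n. A n \<inter> V"
  proof
    show "\<exists>n. A n \<inter> V \<subseteq> U" if "open U" "0 \<in> U" for U
      using base[of U] that by blast
    show "\<exists>W. open W \<and> 0 \<in> W \<and> (\<forall>s\<in>W. \<forall>t. \<bar>f n (s + t) - f n t\<bar> < e)" if "e > 0" for n e
    proof -
      have "f n y = 0" if "y \<notin> K" for y using f(4) that VK(4) by blast
      from topological_group_uniformly_continuous_compact_support[OF tg f(1) VK(2) this \<open>e > 0\<close>]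
      show ?thesis by metis
    qed
  qed (use f in auto)
  from metric_compatible[OF tg] show ?thesis by (rule that)
qed

section \<open>Proper metrics from word norms\<close>

definition word_norm :: "('a::monoid_add \<Rightarrow> real) \<Rightarrow> 'a \<Rightarrow> real" where
  "word_norm c x = (INF ws \<in> {ws. sum_list ws = x}. sum_list (map c ws))"

context
  fixes c :: "'a::monoid_add \<Rightarrow> real"
  assumes cost_nonneg: "\<And>s. 0 \<le> c s"
begin

lemma word_cost_nonneg: "0 \<le> sum_list (map c ws)"
  by (induction ws) (auto intro: add_nonneg_nonneg cost_nonneg)

lemma word_norm_le: "sum_list ws = x \<Longrightarrow> word_norm c x \<le> sum_list (map c ws)"
  unfolding word_norm_def
  by (rule cINF_lower) (auto intro: bdd_belowI[of _ 0] word_cost_nonneg)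

lemma word_norm_greatest:
  "(\<And>ws. sum_list ws = x \<Longrightarrow> m \<le> sum_list (map c ws)) \<Longrightarrow> m \<le> word_norm c x"
  unfolding word_norm_def
  by (rule cINF_greatest) (auto intro: exI[of _ "[x]"])

lemma word_norm_nonneg: "0 \<le> word_norm c x"
  by (rule word_norm_greatest) (rule word_cost_nonneg)

lemma word_norm_zero: "word_norm c 0 = 0"
  using word_norm_le[of "[]" 0] word_norm_nonneg[of 0] by simp

lemma word_norm_add: "word_norm c (x + y) \<le> word_norm c x + word_norm c y"
proof -
  have "word_norm c (x + y) - sum_list (map c vs) \<le> word_norm c x" if "sum_list vs = y" for vs
    using word_norm_le[of "_ @ vs" "x + y"] that
    by (intro word_norm_greatest) (simp add: algebra_simps)
  then have "word_norm c (x + y) - word_norm c x \<le> word_norm c y"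
    by (intro word_norm_greatest) (simp add: algebra_simps)
  then show ?thesis by simp
qed

lemma word_norm_less:
  assumes "word_norm c x < r"
  obtains ws where "sum_list ws = x" "sum_list (map c ws) < r"
proof -
  have "{ws. sum_list ws = x} \<noteq> {}" by (auto intro: exI[of _ "[x]"])
  moreover have "bdd_below ((\<lambda>ws. sum_list (map c ws)) ` {ws. sum_list ws = x})"
    by (intro bdd_belowI[of _ 0]) (auto intro: word_cost_nonneg)
  ultimately have "\<exists>ws\<in>{ws. sum_list ws = x}. sum_list (map c ws) < r"
    using assms unfolding word_norm_def by (subst (asm) cINF_less_iff)
  then show ?thesis using that by blast
qed

text \<open>A letter \<open>s\<close> of cost below \<open>\<epsilon>\<close> costs at least \<open>N s\<close>, and \<open>N\<close> is subadditive along the word.\<close>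
lemma min_le_word_norm:
  fixes N :: "'a \<Rightarrow> real"
  assumes "\<And>a b. N (a + b) \<le> N a + N b" "N 0 = 0" "\<And>s. min \<epsilon> (N s) \<le> c s"
  shows "min \<epsilon> (N x) \<le> word_norm c x"
proof (rule word_norm_greatest)
  show "min \<epsilon> (N x) \<le> sum_list (map c ws)" if "sum_list ws = x" for ws
    unfolding that[symmetric]
  proof (induction ws)
    case (Cons a ws)
    show ?case
    proof (cases "\<epsilon> \<le> c a \<or> \<epsilon> \<le> sum_list (map c ws)")
      case True
      then show ?thesis using cost_nonneg[of a] word_cost_nonneg[of ws] by auto
    next
      case False
      then have "N a \<le> c a" "N (sum_list ws) \<le> sum_list (map c ws)"
        using assms(3)[of a] Cons.IH by (auto simp: min_def split: if_splits)
      then show ?thesis using assms(1)[of a "sum_list ws"] by (simp add: min_le_iff_disj)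
    qed
  qed (simp add: assms(2))
qed

end

lemma word_norm_uminus:
  fixes c :: "'a::group_add \<Rightarrow> real"
  assumes "\<And>s. 0 \<le> c s" "\<And>s. c (- s) = c s"
  shows "word_norm c (- x) = word_norm c x"
proof -
  have le: "word_norm c (- x) \<le> word_norm c x" for x
  proof (rule word_norm_greatest[OF assms(1)])
    fix ws assume "sum_list ws = x"
    moreover have "sum_list (rev (map uminus ws)) = - sum_list ws"
      by (induction ws) (simp_all add: minus_add)
    ultimately have "sum_list (rev (map uminus ws)) = - x" by simp
    then have "word_norm c (- x) \<le> sum_list (map c (rev (map uminus ws)))"
      by (rule word_norm_le[OF assms(1)])
    also have "\<dots> = sum_list (map c ws)"
      by (simp add: rev_map[symmetric] sum_list_rev o_def assms(2))
    finally show "word_norm c (- x) \<le> sum_list (map c ws)" .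
  qed
  show ?thesis using le[of x] le[of "- x"] by simp
qed

primrec sumset_power :: "'a::monoid_add set \<Rightarrow> nat \<Rightarrow> 'a set" where
  "sumset_power T 0 = {0}"
| "sumset_power T (Suc m) = (\<lambda>(a, y). a + y) ` (T \<times> sumset_power T m)"

lemma sumset_power_SucI: "a \<in> T \<Longrightarrow> y \<in> sumset_power T m \<Longrightarrow> a + y \<in> sumset_power T (Suc m)"
  by (auto intro: image_eqI[of _ _ "(a, y)"])

lemma compact_sumset_power:
  fixes T :: "'a::{group_add,topological_space} set"
  assumes "topological_group TYPE('a)" "compact T"
  shows "compact (sumset_power T m)"
  by (induction m) (simp_all add: topological_group_compact_add_image[OF assms])

context
  fixes N c :: "'a::monoid_add \<Rightarrow> real" and \<epsilon> :: real and T :: "'a set"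
  assumes \<epsilon>_pos: "0 < \<epsilon>"
    and N_add: "\<And>a b. N (a + b) \<le> N a + N b" and N_zero: "N 0 = 0" and N_nonneg: "\<And>s. 0 \<le> N s"
    and min_le_cost: "\<And>s. min \<epsilon> (N s) \<le> c s"
    and small_in_T: "\<And>b. N b \<le> 2 * \<epsilon> \<Longrightarrow> b \<in> T"
begin

text \<open>Scanning the word from the right, short stretches of small letters are merged until their
  sum leaves the \<open>\<epsilon>\<close>-ball; every letter of \<open>T\<close> used costs at least \<open>\<epsilon>/2\<close> on average.\<close>
lemma word_sum_decomposition:
  assumes "\<And>a. a \<in> set ws \<Longrightarrow> \<epsilon> < N a \<Longrightarrow> a \<in> T"
  shows "\<exists>b y m. sum_list ws = b + y \<and> y \<in> sumset_power T m \<and> N b \<le> \<epsilon>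
           \<and> real m * \<epsilon> + N b \<le> 2 * sum_list (map c ws)"
  using assms
proof (induction ws)
  case Nil
  show ?case using N_zero \<epsilon>_pos by (intro exI[of _ 0] exI[of _ 0] exI[of _ 0]) simp
next
  case (Cons a ws)
  then obtain b y m where IH: "sum_list ws = b + y" "y \<in> sumset_power T m" "N b \<le> \<epsilon>"
      "real m * \<epsilon> + N b \<le> 2 * sum_list (map c ws)"
    by auto
  have sum: "sum_list (a # ws) = (a + b) + y" using IH(1) by (simp add: add.assoc)
  have Nab: "N (a + b) \<le> N a + N b" by (rule N_add)
  show ?case
  proof (cases "N a \<le> \<epsilon>")
    case small: True
    then have "N a \<le> c a" using min_le_cost[of a] by simp
    show ?thesis
    proof (cases "N (a + b) \<le> \<epsilon>")
      case True
      moreover have "real m * \<epsilon> + N (a + b) \<le> 2 * sum_list (map c (a # ws))"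
        using IH(4) Nab \<open>N a \<le> c a\<close> N_nonneg[of a] by simp
      ultimately show ?thesis using sum IH(2) by blast
    next
      case False
      have "a + b \<in> T" using small IH(3) Nab by (intro small_in_T) simp
      from sumset_power_SucI[OF this IH(2)] have "sum_list (a # ws) \<in> sumset_power T (Suc m)"
        by (simp only: sum)
      moreover have "real (Suc m) * \<epsilon> + N 0 \<le> 2 * sum_list (map c (a # ws))"
        using IH(4) False Nab \<open>N a \<le> c a\<close> N_zero N_nonneg[of a] by (simp add: algebra_simps)
      ultimately show ?thesis using N_zero \<epsilon>_pos by (metis add_0 less_imp_le)
    qed
  next
    case False
    then have "a \<in> T" "\<epsilon> \<le> c a" using Cons.prems min_le_cost[of a] by auto
    moreover have "b \<in> T" using IH(3) N_nonneg[of b] by (intro small_in_T) simp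
    ultimately have "sum_list (a # ws) \<in> sumset_power T (Suc (Suc m))"
      using sumset_power_SucI[OF _ sumset_power_SucI[OF _ IH(2)]]
      by (simp only: sum_list.Cons IH(1))
    moreover have "real (Suc (Suc m)) * \<epsilon> + N 0 \<le> 2 * sum_list (map c (a # ws))"
      using IH(4) \<open>\<epsilon> \<le> c a\<close> N_nonneg[of b] N_zero by (simp add: algebra_simps)
    ultimately show ?thesis using N_zero \<epsilon>_pos by (metis add_0 less_imp_le)
  qed
qed

lemma word_sum_in_sumset_power:
  assumes "\<And>a. a \<in> set ws \<Longrightarrow> \<epsilon> < N a \<Longrightarrow> a \<in> T"
  obtains m where "sum_list ws \<in> sumset_power T (Suc m)" "real m * \<epsilon> \<le> 2 * sum_list (map c ws)"
proof -
  obtain b y m where b: "sum_list ws = b + y" "y \<in> sumset_power T m" "N b \<le> \<epsilon>"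
      "real m * \<epsilon> + N b \<le> 2 * sum_list (map c ws)"
    using word_sum_decomposition[OF assms] by blast
  have "b \<in> T" using b(3) \<epsilon>_pos by (intro small_in_T) simp
  from sumset_power_SucI[OF this b(2)] have "sum_list ws \<in> sumset_power T (Suc m)"
    by (simp only: b(1))
  moreover have "real m * \<epsilon> \<le> 2 * sum_list (map c ws)" using b(4) N_nonneg[of b] by simp
  ultimately show ?thesis by (rule that)
qed

end

lemma compatible_left_invariant_metric_transfer:
  assumes "compatible_left_invariant_metric d"
    and "\<And>x y. d' x y = 0 \<longleftrightarrow> x = y" "\<And>x y. d' x y = d' y x"
    and "\<And>x y z. d' x z \<le> d' x y + d' y z" "\<And>g x y. d' (g + x) (g + y) = d' x y"
    and "\<epsilon> > 0" and agree: "\<And>x y e. e \<le> \<epsilon> \<Longrightarrow> d' x y < e \<longleftrightarrow> d x y < e"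
  shows "compatible_left_invariant_metric d'"
proof
  have "(\<exists>e>0. \<forall>y. d x y < e \<longrightarrow> y \<in> S) \<longleftrightarrow> (\<exists>e>0. \<forall>y. d' x y < e \<longrightarrow> y \<in> S)" for x S
  proof
    assume "\<exists>e>0. \<forall>y. d x y < e \<longrightarrow> y \<in> S"
    then obtain e where "e > 0" "\<forall>y. d x y < e \<longrightarrow> y \<in> S" by blast
    then show "\<exists>e>0. \<forall>y. d' x y < e \<longrightarrow> y \<in> S"
      using agree[of "min e \<epsilon>" x] \<open>\<epsilon> > 0\<close> by (intro exI[of _ "min e \<epsilon>"]) auto
  next
    assume "\<exists>e>0. \<forall>y. d' x y < e \<longrightarrow> y \<in> S"
    then obtain e where "e > 0" "\<forall>y. d' x y < e \<longrightarrow> y \<in> S" by blast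
    then show "\<exists>e>0. \<forall>y. d x y < e \<longrightarrow> y \<in> S"
      using agree[of "min e \<epsilon>" x] \<open>\<epsilon> > 0\<close> by (intro exI[of _ "min e \<epsilon>"]) auto
  qed
  then show "open S \<longleftrightarrow> (\<forall>x\<in>S. \<exists>e>0. \<forall>y. d' x y < e \<longrightarrow> y \<in> S)" for S
    using compatible_left_invariant_metric.open_iff[OF assms(1)] by simp
qed (fact assms)+

context compatible_left_invariant_metric
begin

text \<open>Distances below \<open>\<epsilon>\<close> are unchanged: only letters of \<open>d\<close>-norm below \<open>\<epsilon>\<close> cost less than \<open>\<epsilon>\<close>,
  and those cost their \<open>d\<close>-norm.\<close>
lemma word_metric_compatible:
  assumes "\<epsilon> > 0" "\<And>s. 0 \<le> c s" "\<And>s. c (- s) = c s"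
    and "\<And>s. min \<epsilon> (d 0 s) \<le> c s" "\<And>s. d 0 s \<le> \<epsilon> \<Longrightarrow> c s \<le> d 0 s"
  shows "compatible_left_invariant_metric (\<lambda>x y. word_norm c (-x + y))"
proof (rule compatible_left_invariant_metric_transfer[OF compatible_left_invariant_metric_axioms
      _ _ _ _ \<open>\<epsilon> > 0\<close>])
  have lower: "min \<epsilon> (d 0 x) \<le> word_norm c x" for x
    using min_le_word_norm[of c, OF assms(2) dist_zero_add dist_self assms(4)] .
  have upper: "word_norm c x \<le> d 0 x" if "d 0 x \<le> \<epsilon>" for x
    using word_norm_le[of c "[x]" x, OF assms(2)] assms(5)[OF that] by simp
  show "word_norm c (-x + y) = 0 \<longleftrightarrow> x = y" for x y
  proof
    assume "word_norm c (-x + y) = 0"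
    then have "d x y = 0"
      using lower[of "-x + y"] \<open>\<epsilon> > 0\<close> nonneg[of 0 "-x + y"] eq_dist_zero[of x y]
      by (simp add: min_le_iff_disj)
    then show "x = y" by (simp add: zero_iff)
  qed (simp add: word_norm_zero[of c, OF assms(2)])
  show "word_norm c (-x + y) = word_norm c (-y + x)" for x y
    using word_norm_uminus[of c "-x + y", OF assms(2,3)] by (simp add: minus_add)
  show "word_norm c (-x + z) \<le> word_norm c (-x + y) + word_norm c (-y + z)" for x y z
    using word_norm_add[of c "-x + y" "-y + z", OF assms(2)] by (simp add: add.assoc)
  show "word_norm c (- (g + x) + (g + y)) = word_norm c (-x + y)" for g x y
    by (simp only: minus_add add.assoc minus_add_cancel)
  show "word_norm c (-x + y) < e \<longleftrightarrow> d x y < e" if "e \<le> \<epsilon>" for x y e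
    using lower[of "-x + y"] upper[of "-x + y"] that eq_dist_zero[of x y]
    by (auto simp: min_def split: if_splits)
qed

lemma word_norm_less_in_sumset_power:
  assumes "\<epsilon> > 0" "\<And>s. 0 \<le> c s" "\<And>s. min \<epsilon> (d 0 s) \<le> c s"
    and "\<And>b. d 0 b \<le> 2 * \<epsilon> \<Longrightarrow> b \<in> T" "\<And>a. \<epsilon> < d 0 a \<Longrightarrow> c a < R \<Longrightarrow> a \<in> T"
    and "word_norm c s < R"
  obtains m where "s \<in> sumset_power T (Suc m)" "real m * \<epsilon> < 2 * R"
proof -
  obtain ws where ws: "sum_list ws = s" "sum_list (map c ws) < R"
    using word_norm_less[of c s R, OF assms(2,6)] .
  have "c a \<le> sum_list (map c ws)" if "a \<in> set ws" for a
    using that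
    by (induction ws) (auto intro: add_increasing add_increasing2 assms(2) word_cost_nonneg)
  with ws(2) assms(5) have "a \<in> T" if "a \<in> set ws" "\<epsilon> < d 0 a" for a
    using that by fastforce
  then obtain m where "s \<in> sumset_power T (Suc m)" "real m * \<epsilon> \<le> 2 * sum_list (map c ws)"
    using word_sum_in_sumset_power[OF assms(1) dist_zero_add dist_self nonneg assms(3,4), of ws]
      ws(1) by blast
  with ws(2) show ?thesis using that by simp
qed

lemma word_norm_sublevel_subset_compact:
  fixes C :: "nat \<Rightarrow> 'a set" and w :: "'a \<Rightarrow> nat"
  assumes tg: "topological_group TYPE('a)"
    and "\<epsilon> > 0" "compact {y. d 0 y \<le> 2 * \<epsilon>}" "\<And>n. compact (C n)"
    and c: "\<And>s. 0 \<le> c s" "\<And>s. min \<epsilon> (d 0 s) \<le> c s" "\<And>s. \<epsilon> < d 0 s \<Longrightarrow> real (w s) \<le> c s"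
    and w: "\<And>s. s \<in> C (w s) \<union> uminus ` C (w s)"
  obtains Q where "compact Q" "{s. word_norm c s \<le> r} \<subseteq> Q"
proof -
  define T where "T = {y. d 0 y \<le> 2 * \<epsilon>} \<union> (\<Union>n\<le>nat \<lceil>r + 1\<rceil>. C n \<union> uminus ` C n)"
  define Q where "Q = (\<Union>m\<le>nat \<lceil>2 * (r + 1) / \<epsilon>\<rceil>. sumset_power T (Suc m))"
  have "compact T"
    unfolding T_def using assms(3,4) topological_group_compact_uminus[OF tg]
    by (intro compact_Un compact_UN) auto
  then have "compact Q" unfolding Q_def by (intro compact_UN compact_sumset_power[OF tg]) auto
  have large_in_T: "a \<in> T" if "\<epsilon> < d 0 a" "c a < r + 1" for a
  proof -
    have "w a \<le> nat \<lceil>r + 1\<rceil>" using c(3)[OF that(1)] that(2) by linarith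
    then show ?thesis using w[of a] unfolding T_def by blast
  qed
  have small_in_T: "b \<in> T" if "d 0 b \<le> 2 * \<epsilon>" for b
    using that unfolding T_def by blast
  have "s \<in> Q" if "word_norm c s \<le> r" for s
  proof -
    have "word_norm c s < r + 1" using that by simp
    then obtain m where m: "s \<in> sumset_power T (Suc m)" "real m * \<epsilon> < 2 * (r + 1)"
      using word_norm_less_in_sumset_power[OF \<open>\<epsilon> > 0\<close> c(1,2) small_in_T large_in_T] by blast
    then have "real m < 2 * (r + 1) / \<epsilon>" using \<open>\<epsilon> > 0\<close> by (simp add: field_simps)
    then have "m \<le> nat \<lceil>2 * (r + 1) / \<epsilon>\<rceil>" by linarith
    with m(1) show ?thesis unfolding Q_def by blast
  qed
  with \<open>compact Q\<close> show ?thesis using that by blast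
qed

text \<open>Charging large letters by the index of the first \<open>C n\<close> containing them forces a ball of
  radius \<open>r\<close> to use only finitely many \<open>C n\<close> and boundedly many large letters.\<close>
lemma proper_metric_exists:
  fixes C :: "nat \<Rightarrow> 'a set"
  assumes tg: "topological_group TYPE('a)"
    and "\<epsilon> > 0" "compact {y. d 0 y \<le> 2 * \<epsilon>}"
    and C: "\<And>n. compact (C n)" "\<And>x. \<exists>n. x \<in> C n"
  obtains d' :: "'a \<Rightarrow> 'a \<Rightarrow> real" where "proper_compatible_left_invariant_metric d'"
proof -
  define w where "w s = (LEAST n. s \<in> C n \<union> uminus ` C n)" for s
  have w: "s \<in> C (w s) \<union> uminus ` C (w s)" for s
    unfolding w_def by (rule LeastI_ex) (use C(2)[of s] in blast)
  have "- s \<in> C n \<union> uminus ` C n \<longleftrightarrow> s \<in> C n \<union> uminus ` C n" for s n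
    by (auto simp: image_iff) (metis minus_minus)+
  then have w_uminus: "w (- s) = w s" for s unfolding w_def by simp
  define c where "c s = (if d 0 s \<le> \<epsilon> then d 0 s else \<epsilon> + real (w s))" for s
  have c_nonneg: "0 \<le> c s" for s unfolding c_def using nonneg \<open>\<epsilon> > 0\<close> by simp
  have min_le_c: "min \<epsilon> (d 0 s) \<le> c s" for s unfolding c_def by simp
  have w_le_c: "real (w s) \<le> c s" if "\<epsilon> < d 0 s" for s using that \<open>\<epsilon> > 0\<close> unfolding c_def by simp
  interpret d': compatible_left_invariant_metric "\<lambda>x y. word_norm c (-x + y)"
    by (rule word_metric_compatible[OF \<open>\<epsilon> > 0\<close> c_nonneg _ min_le_c])
      (simp_all add: c_def dist_zero_uminus w_uminus)
  have "compact {y. word_norm c (-x + y) \<le> r}" for x r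
  proof -
    obtain Q where "compact Q" "{s. word_norm c s \<le> r} \<subseteq> Q"
      by (rule word_norm_sublevel_subset_compact[OF tg \<open>\<epsilon> > 0\<close> assms(3) C(1) c_nonneg min_le_c
            w_le_c w])
    then have "{y. word_norm c (-x + y) \<le> r} \<subseteq> (\<lambda>s. x + s) ` Q"
      by (force intro: image_eqI[of _ _ "-x + _"] simp: add.assoc[symmetric])
    then show ?thesis
      using closed_Int_compact[OF d'.closed_ball
          topological_group_compact_translation[OF tg \<open>compact Q\<close>]]
      by (metis inf.absorb_iff1)
  qed
  with d'.compatible_left_invariant_metric_axioms
  have "proper_compatible_left_invariant_metric (\<lambda>x y. word_norm c (-x + y))"
    unfolding proper_compatible_left_invariant_metric_iff by blast
  then show ?thesis by (rule that)
qed

end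

lemma lcsc_group_proper_compatible_left_invariant_metric:
  assumes "lcsc_group TYPE('a)"
  obtains d :: "'a::{group_add,t2_space,second_countable_topology} \<Rightarrow> 'a \<Rightarrow> real"
  where "proper_compatible_left_invariant_metric d"
proof -
  have tg: "topological_group TYPE('a)" by (rule lcsc_group_imp_topological_group[OF assms])
  obtain d0 :: "'a \<Rightarrow> 'a \<Rightarrow> real" where "compatible_left_invariant_metric d0"
    by (rule lcsc_group_compatible_left_invariant_metric[OF assms])
  then interpret d0: compatible_left_invariant_metric d0 .
  obtain V K :: "'a set" where "open V" "compact K" "0 \<in> V" "V \<subseteq> K"
    by (rule lcsc_group_compact_neighbourhood[OF assms])
  then obtain e where "e > 0" "compact {y. d0 0 y \<le> e}"
    by (rule d0.compact_small_closed_ball)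
  moreover obtain C :: "nat \<Rightarrow> 'a set" where "\<And>n. compact (C n)" "\<And>x. \<exists>n. x \<in> C n"
    using lcsc_group_sigma_compact[OF assms] by blast
  ultimately show ?thesis
    using d0.proper_metric_exists[OF tg, of "e / 2" C] that by auto
qed

section \<open>Coarse equivalence from commuting actions\<close>

lemma filterlim_at_top_if_controlled:
  fixes u v :: "'a \<Rightarrow> real"
  assumes "\<And>r. \<exists>s. \<forall>x. u x \<le> r \<longrightarrow> v x \<le> s" "filterlim v at_top F"
  shows "filterlim u at_top F"
  unfolding filterlim_at_top
proof
  fix r :: real
  obtain s where s: "\<And>x. u x \<le> r \<Longrightarrow> v x \<le> s" using assms(1) by blast
  have "eventually (\<lambda>x. s + 1 \<le> v x) F" using assms(2) unfolding filterlim_at_top by blast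
  then show "eventually (\<lambda>x. r \<le> u x) F"
  proof (rule eventually_mono)
    show "r \<le> u x" if "s + 1 \<le> v x" for x
      using s[of x] that by (cases "u x \<le> r") auto
  qed
qed

lemma filterlim_at_top_related:
  fixes dA :: "'a \<Rightarrow> 'a \<Rightarrow> real" and dB :: "'b \<Rightarrow> 'b \<Rightarrow> real"
  assumes "\<And>r. \<exists>s. \<forall>a a' b b'. R a b \<longrightarrow> R a' b' \<longrightarrow> dA a a' \<le> r \<longrightarrow> dB b b' \<le> s"
    and "\<And>n. R (as n) (bs n)" "\<And>n. R (as' n) (bs' n)"
    and "filterlim (\<lambda>n. dB (bs n) (bs' n)) at_top F"
  shows "filterlim (\<lambda>n. dA (as n) (as' n)) at_top F"
proof (rule filterlim_at_top_if_controlled[OF _ assms(4)])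
  fix r
  obtain s where "\<And>a a' b b'. R a b \<Longrightarrow> R a' b' \<Longrightarrow> dA a a' \<le> r \<Longrightarrow> dB b b' \<le> s"
    using assms(1)[of r] by blast
  then show "\<exists>s. \<forall>n. dA (as n) (as' n) \<le> r \<longrightarrow> dB (bs n) (bs' n) \<le> s"
    using assms(2,3) by blast
qed

lemma coarsely_equivalentI:
  fixes dG :: "'g::{group_add,topological_space} \<Rightarrow> 'g \<Rightarrow> real"
    and dH :: "'h::{group_add,topological_space} \<Rightarrow> 'h \<Rightarrow> real"
    and R :: "'g \<Rightarrow> 'h \<Rightarrow> bool"
  assumes "proper_compatible_left_invariant_metric dG" "proper_compatible_left_invariant_metric dH"
    and "\<And>g. \<exists>h. R g h" "\<And>h. \<exists>g. R g h"
    and GH: "\<And>r. \<exists>s. \<forall>g g' h h'. R g h \<longrightarrow> R g' h' \<longrightarrow> dG g g' \<le> r \<longrightarrow> dH h h' \<le> s"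
    and HG: "\<And>r. \<exists>s. \<forall>h h' g g'. R g h \<longrightarrow> R g' h' \<longrightarrow> dH h h' \<le> r \<longrightarrow> dG g g' \<le> s"
  shows "coarsely_equivalent TYPE('g) TYPE('h)"
proof -
  interpret dG: compatible_left_invariant_metric dG
    using assms(1) by (simp add: proper_compatible_left_invariant_metric_iff)
  interpret dH: compatible_left_invariant_metric dH
    using assms(2) by (simp add: proper_compatible_left_invariant_metric_iff)
  define f where "f g = (SOME h. R g h)" for g
  have R_f: "R g (f g)" for g unfolding f_def using assms(3) by (rule someI_ex)
  obtain C where C: "\<And>g g' h h'. R g h \<Longrightarrow> R g' h' \<Longrightarrow> dG g g' \<le> 0 \<Longrightarrow> dH h h' \<le> C"
    using GH[of 0] by blast
  have "(INF g. dH h (f g)) \<le> C" for h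
  proof -
    obtain g where "R g h" using assms(4) by blast
    then have "dH h (f g) \<le> C" using C[OF _ R_f] dG.dist_self by simp
    moreover have "bdd_below (range (\<lambda>g. dH h (f g)))"
      by (intro bdd_belowI[of _ 0]) (auto intro: dH.nonneg)
    ultimately show ?thesis by (intro cINF_lower2[of _ _ g]) auto
  qed
  moreover have "filterlim (\<lambda>n. dG (gs n) (gs' n)) at_top sequentially \<longleftrightarrow>
      filterlim (\<lambda>n. dH (f (gs n)) (f (gs' n))) at_top sequentially" for gs gs' :: "nat \<Rightarrow> 'g"
    using filterlim_at_top_related[of R dG dH, OF GH R_f R_f]
      filterlim_at_top_related[of "\<lambda>h g. R g h" dH dG, OF HG R_f R_f]
    by blast
  ultimately show ?thesis
    unfolding coarsely_equivalent_def using assms(1,2)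
    by (intro exI[of _ dG] exI[of _ dH] exI[of _ f] conjI exI[of _ C] allI)
qed

locale commuting_actions =
  fixes \<alpha> :: "'g::group_add \<Rightarrow> 'w \<Rightarrow> 'w" and \<beta> :: "'h::group_add \<Rightarrow> 'w \<Rightarrow> 'w"
  assumes \<alpha>_zero: "\<alpha> 0 w = w" and \<alpha>_add: "\<alpha> (g + g') w = \<alpha> g (\<alpha> g' w)"
    and \<beta>_zero: "\<beta> 0 w = w" and \<beta>_add: "\<beta> (h + h') w = \<beta> h (\<beta> h' w)"
    and commute: "\<alpha> g (\<beta> h w) = \<beta> h (\<alpha> g w)"
begin

lemma \<beta>_cancel: "\<beta> (- h) (\<beta> h w) = w"
  using \<beta>_add[of "- h" h w] by (simp add: \<beta>_zero)

text \<open>\<open>related Z z\<^sub>0 g h\<close> means \<open>z\<^sub>0 \<in> (g, h).Z\<close>.\<close>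
definition related :: "'w set \<Rightarrow> 'w \<Rightarrow> 'g \<Rightarrow> 'h \<Rightarrow> bool" where
  "related Z z\<^sub>0 g h \<longleftrightarrow> \<alpha> (- g) (\<beta> (- h) z\<^sub>0) \<in> Z"

sublocale swap: commuting_actions \<beta> \<alpha>
  by unfold_locales (simp_all add: \<alpha>_zero \<alpha>_add \<beta>_zero \<beta>_add commute)

lemma swap_related: "swap.related Z z\<^sub>0 h g = related Z z\<^sub>0 g h"
  unfolding related_def swap.related_def by (simp add: commute)

lemma related_exists:
  assumes "(\<Union>h. \<beta> h ` Z) = UNIV"
  shows "\<exists>h. related Z z\<^sub>0 g h"
proof -
  obtain h z where "z \<in> Z" "\<alpha> (- g) z\<^sub>0 = \<beta> h z" using assms by blast
  then have "related Z z\<^sub>0 g h" unfolding related_def by (simp add: commute \<beta>_cancel)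
  then show ?thesis ..
qed

lemma related_displacement:
  assumes "related Z z\<^sub>0 g h" "related Z z\<^sub>0 g' h'" "-g + g' \<in> K"
    and "(\<Union>k\<in>uminus ` K. \<alpha> k ` Z) \<subseteq> (\<Union>l\<in>L. \<beta> l ` Z)"
  shows "-h + h' \<in> (\<lambda>(l, e). l + - e) ` (L \<times> {e. \<beta> e ` Z \<inter> Z \<noteq> {}})"
proof -
  define z where "z = \<alpha> (- g) (\<beta> (- h) z\<^sub>0)"
  define k where "k = -g + g'"
  have "\<alpha> (- k) z \<in> (\<Union>k\<in>uminus ` K. \<alpha> k ` Z)"
    using assms(1,3) unfolding z_def k_def related_def by blast
  then obtain l z\<^sub>1 where l: "l \<in> L" "z\<^sub>1 \<in> Z" "\<alpha> (- k) z = \<beta> l z\<^sub>1" using assms(4) by blast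
  have "\<alpha> (- g') (\<beta> (- h') z\<^sub>0) = \<alpha> (- k) (\<alpha> (- g) (\<beta> (- h' + h) (\<beta> (- h) z\<^sub>0)))"
    unfolding k_def \<alpha>_add[symmetric] \<beta>_add[symmetric] by (simp add: minus_add add.assoc)
  also have "\<dots> = \<beta> (- h' + h) (\<alpha> (- k) z)"
    unfolding z_def by (simp only: commute)
  also have "\<dots> = \<beta> (- h' + h + l) z\<^sub>1" by (simp add: l(3) \<beta>_add)
  finally have "\<beta> (- h' + h + l) z\<^sub>1 \<in> Z" using assms(2) unfolding related_def by simp
  with l(2) have "- h' + h + l \<in> {e. \<beta> e ` Z \<inter> Z \<noteq> {}}" by blast
  moreover have "-h + h' = l + - (- h' + h + l)"
    by (simp only: minus_add minus_minus add.assoc add_minus_cancel)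
  ultimately show ?thesis using l(1) by (intro image_eqI[of _ _ "(l, - h' + h + l)"]) auto
qed

end

lemma commuting_actions_related_controlled:
  fixes \<alpha> :: "'g::{group_add,topological_space} \<Rightarrow> 'w \<Rightarrow> 'w"
    and \<beta> :: "'h::{group_add,topological_space} \<Rightarrow> 'w \<Rightarrow> 'w"
    and dG :: "'g \<Rightarrow> 'g \<Rightarrow> real" and dH :: "'h \<Rightarrow> 'h \<Rightarrow> real"
  assumes "commuting_actions \<alpha> \<beta>"
    and "topological_group TYPE('g)" "topological_group TYPE('h)"
    and "proper_compatible_left_invariant_metric dG" "proper_compatible_left_invariant_metric dH"
    and "compact (closure {e. \<beta> e ` Z \<inter> Z \<noteq> {}})"
    and "\<forall>K. compact K \<longrightarrow> (\<exists>L. compact L \<and> (\<Union>k\<in>K. \<alpha> k ` Z) \<subseteq> (\<Union>l\<in>L. \<beta> l ` Z))"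
  shows "\<exists>s. \<forall>g g' h h'. commuting_actions.related \<alpha> \<beta> Z z\<^sub>0 g h \<longrightarrow>
    commuting_actions.related \<alpha> \<beta> Z z\<^sub>0 g' h' \<longrightarrow> dG g g' \<le> r \<longrightarrow> dH h h' \<le> s"
proof -
  interpret commuting_actions \<alpha> \<beta> by (fact assms(1))
  interpret dG: compatible_left_invariant_metric dG
    using assms(4) by (simp add: proper_compatible_left_invariant_metric_iff)
  interpret dH: compatible_left_invariant_metric dH
    using assms(5) by (simp add: proper_compatible_left_invariant_metric_iff)
  define E where "E = {e. \<beta> e ` Z \<inter> Z \<noteq> {}}"
  have "compact (uminus ` {k. dG 0 k \<le> r})"
    using assms(4) by (intro topological_group_compact_uminus[OF assms(2)])
      (simp add: proper_compatible_left_invariant_metric_iff)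
  from assms(7)[rule_format, OF this] obtain L where L: "compact L"
    "(\<Union>k\<in>uminus ` {k. dG 0 k \<le> r}. \<alpha> k ` Z) \<subseteq> (\<Union>l\<in>L. \<beta> l ` Z)"
    by blast
  have "compact ((\<lambda>(l, e). l + - e) ` (L \<times> closure E))"
    using topological_group_compact_diff_image[OF assms(3) L(1) assms(6)] unfolding E_def .
  then obtain s where s: "\<And>x. x \<in> (\<lambda>(l, e). l + - e) ` (L \<times> closure E) \<Longrightarrow> dH 0 x \<le> s"
    using dH.compact_imp_bounded[where a = 0] by blast
  have "dH h h' \<le> s" if "related Z z\<^sub>0 g h" "related Z z\<^sub>0 g' h'" "dG g g' \<le> r" for g g' h h'
  proof -
    have "-g + g' \<in> {k. dG 0 k \<le> r}" using that(3) dG.eq_dist_zero by simp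
    from related_displacement[OF that(1,2) this L(2)]
    have "-h + h' \<in> (\<lambda>(l, e). l + - e) ` (L \<times> E)" unfolding E_def .
    moreover have "L \<times> E \<subseteq> L \<times> closure E" using closure_subset by blast
    ultimately have "-h + h' \<in> (\<lambda>(l, e). l + - e) ` (L \<times> closure E)" by blast
    then show ?thesis using s dH.eq_dist_zero[of h h'] by simp
  qed
  then show ?thesis by blast
qed

lemma product_action_imp_commuting_actions:
  fixes act :: "'g::group_add \<times> 'h::group_add \<Rightarrow> 'w \<Rightarrow> 'w"
  assumes "product_action act"
  shows "commuting_actions (\<lambda>g. act (g, 0)) (\<lambda>h. act (0, h))"
proof -
  have zero: "act (0, 0) w = w" and add: "act (g + g', h + h') w = act (g, h) (act (g', h') w)"
    for g g' h h' w
    using assms unfolding product_action_def by blast+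
  show ?thesis
    by unfold_locales (simp_all add: zero flip: add)
qed

theorem mainTheorem17:
  fixes act :: "'g::{group_add, t2_space, second_countable_topology} \<times>
                'h::{group_add, t2_space, second_countable_topology} \<Rightarrow> 'w \<Rightarrow> 'w"
    and Z :: "'w set"
  assumes "lcsc_group TYPE('g)" and "lcsc_group TYPE('h)"
    and "product_action act"
    and "(\<Union>g. (\<lambda>z. act (g, 0) z) ` Z) = UNIV"
    and "(\<Union>h. (\<lambda>z. act (0, h) z) ` Z) = UNIV"
    and "compact (closure {g. (\<lambda>z. act (g, 0) z) ` Z \<inter> Z \<noteq> {}})"
    and "compact (closure {h. (\<lambda>z. act (0, h) z) ` Z \<inter> Z \<noteq> {}})"
    and "\<forall>K. compact K \<longrightarrow> (\<exists>L. compact L \<and>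
           (\<Union>k\<in>K. (\<lambda>z. act (k, 0) z) ` Z) \<subseteq> (\<Union>l\<in>L. (\<lambda>z. act (0, l) z) ` Z))"
    and "\<forall>L. compact L \<longrightarrow> (\<exists>K. compact K \<and>
           (\<Union>l\<in>L. (\<lambda>z. act (0, l) z) ` Z) \<subseteq> (\<Union>k\<in>K. (\<lambda>z. act (k, 0) z) ` Z))"
  shows "coarsely_equivalent TYPE('g) TYPE('h)"
proof -
  obtain dG :: "'g \<Rightarrow> 'g \<Rightarrow> real" where dG: "proper_compatible_left_invariant_metric dG"
    using lcsc_group_proper_compatible_left_invariant_metric[OF assms(1)] by blast
  obtain dH :: "'h \<Rightarrow> 'h \<Rightarrow> real" where dH: "proper_compatible_left_invariant_metric dH"
    using lcsc_group_proper_compatible_left_invariant_metric[OF assms(2)] by blast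
  have tg: "topological_group TYPE('g)" "topological_group TYPE('h)"
    using assms(1,2) by (simp_all add: lcsc_group_imp_topological_group)
  interpret commuting_actions "\<lambda>g. act (g, 0)" "\<lambda>h. act (0, h)"
    by (rule product_action_imp_commuting_actions[OF assms(3)])
  fix z\<^sub>0 :: 'w
  show ?thesis
  proof (rule coarsely_equivalentI[OF dG dH, of "related Z z\<^sub>0"])
    show "\<exists>h. related Z z\<^sub>0 g h" for g
      using related_exists assms(5) by simp
    show "\<exists>g. related Z z\<^sub>0 g h" for h
      using swap.related_exists[of Z z\<^sub>0 h] assms(4) by (simp add: swap_related)
    show "\<exists>s. \<forall>g g' h h'. related Z z\<^sub>0 g h \<longrightarrow> related Z z\<^sub>0 g' h' \<longrightarrow> dG g g' \<le> r \<longrightarrow> dH h h' \<le> s"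
      for r
      using commuting_actions_related_controlled[OF commuting_actions_axioms tg dG dH assms(7,8)] .
    show "\<exists>s. \<forall>h h' g g'. related Z z\<^sub>0 g h \<longrightarrow> related Z z\<^sub>0 g' h' \<longrightarrow> dH h h' \<le> r \<longrightarrow> dG g g' \<le> s"
      for r
      using commuting_actions_related_controlled[OF swap.commuting_actions_axioms tg(2,1) dH dG
          assms(6,9)]
      unfolding swap_related .
  qed
qed

end
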